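(* Let $(X,V)$ and $(\overline{X},\overline{V})$ be global solutions of the discrete Motsch–Tadmor model (as in the context) whose initial data satisfy \[ \max\{\|\Delta^x(0)\|_F,\|\Delta^{\overline{x}}(0)\|_F\}<M,\quad \|\Delta^v(0)\|_F<\kappa\int_{\|\Delta^x(0)\|_F}^M\psi(s)\,ds,\quad \|\Delta^{\overline{v}}(0)\|_F<\kappa\int_{\|\Delta^{\overline{x}}(0)\|_F}^M\psi(s)\,ds. \] Define $\lambda(n)=\min_{1\le i,j\le N}(\overline{\phi}_{ij}(n)+\overline{\phi}_{ji}(n))$ and $\alpha(n)=\max_{1\le i,j\le N}(1-\overline{\phi}_{ij}(n)-\overline{\phi}_{ii}(n))^2$. Then for all $n\ge0$, \[ \|\Delta^v(n+1)-\Delta^{\overline{v}}(n+1)\|_F^2\le\mathcal{C}_1\|\Delta^v(n)-\Delta^{\overline{v}}(n)\|_F^2+\mathcal{C}_2\|\Delta^v(n)-\Delta^{\overline{v}}(n)\|_F\|\Delta^v(n)\|_F+\mathcal{C}_3\|\Delta^v(n)\|_F^2, \] where \[ \mathcal{C}_1=(1-h\kappa\lambda(n))^2+4h^2\kappa^2\Big(\alpha(n)+\frac{L_a^2M^2}{Nc_1^2}\big(1+\tfrac{c_2}{c_1}\big)^2\Big)+2\sqrt{2}h\kappa(1-h\kappa\lambda(n))\Big(\alpha(n)+\frac{L_a^2M^2}{c_1^2}\big(1+\tfrac{c_2}{c_1}\big)^2\Big)^{1/2}, \] \[ \mathcal{C}_2=\frac{8h\kappa L_aM}{c_1}(1-h\kappa\lambda(n))\big(1+\tfrac{c_2}{c_1}\big),\qquad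 \mathcal{C}_3=\frac{32h^2\kappa^2L_a^2M^2}{c_1^2}\big(1+\tfrac{c_2}{c_1}\big)^2 . \]
   Context: Discrete MT model: fix $N\ge1$, $d\ge1$, $\kappa>0$, $h>0$, and $a:[0,\infty)\to\mathbb{R}$ with constants $0<c_1\le c_2$, $c_1\le a\le c_2$, $|a(r_1)-a(r_2)|\le L_a|r_1-r_2|$ ($L_a>0$); $0<h<\min\{1,1/\kappa\}$. A solution satisfies $x_i(n+1)=x_i(n)+hv_i(n)$, $v_i(n+1)=v_i(n)+h\kappa\sum_j\phi_{ij}(n)(v_j(n)-v_i(n))$ with $\phi_{ij}(n)=\frac{a(\|x_i(n)-x_j(n)\|)}{\sum_ka(\|x_i(n)-x_k(n)\|)}$; for the second solution $\overline{\phi}_{ij}(n)=\frac{a(\|\overline{x}_i(n)-\overline{x}_j(n)\|)}{\sum_ka(\|\overline{x}_i(n)-\overline{x}_k(n)\|)}$. Notation: $\Delta^x_{ij}=x_i-x_j$, $\Delta^v_{ij}=v_i-v_j$, similarly $\Delta^{\overline{x}},\Delta^{\overline{v}}$; $\|A\|_F=(\sum_{i,j}\|A_{ij}\|^2)^{1/2}$. Constants: $\|\phi\|_{\mathrm{Lip}}=\frac{L_a}{Nc_1}(1+\frac{c_2}{c_1})$, $M=\frac{1}{4N\|\phi\|_{\mathrm{Lip}}}$, $\psi(s)=1-\|\phi\|_{\mathrm{Lip}}Ns$. *)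

theory Defs
  imports "HOL-Analysis.Analysis"
begin

text \<open>Agents are indexed by 0..N-1; a trajectory is x :: nat => nat => real^'d
  with x n i the state of agent i at time step n.\<close>

definition mt_phi :: "nat \<Rightarrow> (real \<Rightarrow> real) \<Rightarrow> (nat \<Rightarrow> nat \<Rightarrow> real^'d) \<Rightarrow> nat \<Rightarrow> nat \<Rightarrow> nat \<Rightarrow> real" where
  "mt_phi N a x n i j =
     a (norm (x n i - x n j)) / (\<Sum>k<N. a (norm (x n i - x n k)))"

definition mt_solution :: "nat \<Rightarrow> real \<Rightarrow> real \<Rightarrow> (real \<Rightarrow> real)
    \<Rightarrow> (nat \<Rightarrow> nat \<Rightarrow> real^'d) \<Rightarrow> (nat \<Rightarrow> nat \<Rightarrow> real^'d) \<Rightarrow> bool" where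
  "mt_solution N \<kappa> h a x v \<longleftrightarrow>
     (\<forall>n. \<forall>i<N.
        x (Suc n) i = x n i + h *\<^sub>R v n i \<and>
        v (Suc n) i = v n i + (h * \<kappa>) *\<^sub>R (\<Sum>j<N. mt_phi N a x n i j *\<^sub>R (v n j - v n i)))"

definition frob :: "nat \<Rightarrow> (nat \<Rightarrow> nat \<Rightarrow> real^'d) \<Rightarrow> real" where
  "frob N D = sqrt (\<Sum>i<N. \<Sum>j<N. (norm (D i j))\<^sup>2)"

definition Delta :: "(nat \<Rightarrow> nat \<Rightarrow> real^'d) \<Rightarrow> nat \<Rightarrow> nat \<Rightarrow> nat \<Rightarrow> real^'d" where
  "Delta y n i j = y n i - y n j"

definition phi_lip :: "nat \<Rightarrow> real \<Rightarrow> real \<Rightarrow> real \<Rightarrow> real" where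
  "phi_lip N La c1 c2 = La / (real N * c1) * (1 + c2 / c1)"

definition Mconst :: "nat \<Rightarrow> real \<Rightarrow> real \<Rightarrow> real \<Rightarrow> real" where
  "Mconst N La c1 c2 = 1 / (4 * real N * phi_lip N La c1 c2)"

definition psi :: "nat \<Rightarrow> real \<Rightarrow> real \<Rightarrow> real \<Rightarrow> real \<Rightarrow> real" where
  "psi N La c1 c2 s = 1 - phi_lip N La c1 c2 * real N * s"

end

theory Submission
  imports Defs
begin

text \<open>
  Write \<open>t = h \<kappa>\<close> and let the spread of a family \<open>u\<close> be the Frobenius norm of
  \<open>(u i - u j)\<^sub>i\<^sub>j\<close>. A velocity update is a consensus step
  \<open>u i + t \<Sum>\<^sub>k p i k (u k - u i)\<close> with a row-stochastic \<open>p\<close>, and the difference of the two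
  updates is a consensus step for \<open>v - vb\<close> plus \<open>t\<close> times a zero-row-sum combination
  of \<open>v\<close>. For a zero-row-sum matrix \<open>d\<close> the family \<open>\<Sum>\<^sub>k d i k u k\<close> has spread at most
  \<open>2 \<parallel>d\<parallel>\<^sub>F\<close> times that of \<open>u\<close>; writing \<open>p = 1/N + d\<close>, a consensus step therefore
  multiplies the spread by at most \<open>1 - t + 2 t \<parallel>p - 1/N\<parallel>\<^sub>F\<close>.

  A discrete flocking estimate, with Lyapunov functional \<open>V + \<kappa> \<integral>\<^sub>0\<^sup>X \<psi>\<close>, keeps both
  position spreads below \<open>M\<close> forever, so \<open>\<parallel>\<phi> - 1/N\<parallel>\<^sub>F \<le> L\<^sub>a M / (N c\<^sub>1) \<le> 1/(8 N)\<close> and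
  the velocity-difference spread obeys \<open>R \<le> (1 - t + t/(4N)) X + t/(2N) V\<close>. Squaring
  gives the claim, because \<open>M\<close> is chosen so that \<open>L\<^sub>a M / c\<^sub>1 (1 + c\<^sub>2/c\<^sub>1) = 1/4\<close>; of
  \<open>\<lambda>\<close> and \<open>\<alpha>\<close> only \<open>\<lambda>(n) \<le> 2/N\<close> and \<open>\<alpha>(n) \<ge> 0\<close> are needed.
\<close>

section \<open>Spread of a family and consensus steps\<close>

definition spread :: "nat \<Rightarrow> (nat \<Rightarrow> 'v::real_normed_vector) \<Rightarrow> real" where
  "spread N u = sqrt (\<Sum>i<N. \<Sum>j<N. (norm (u i - u j))\<^sup>2)"

definition frob_real :: "nat \<Rightarrow> (nat \<Rightarrow> nat \<Rightarrow> real) \<Rightarrow> real" where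
  "frob_real N p = sqrt (\<Sum>i<N. \<Sum>j<N. (p i j)\<^sup>2)"

lemma spread_nonneg: "0 \<le> spread N u"
  unfolding spread_def by (simp add: sum_nonneg)

lemma spread_squared: "(spread N u)\<^sup>2 = (\<Sum>i<N. \<Sum>j<N. (norm (u i - u j))\<^sup>2)"
  unfolding spread_def by (simp add: sum_nonneg)

lemma spread_L2_set: "spread N u = L2_set (\<lambda>(i, j). norm (u i - u j)) ({..<N} \<times> {..<N})"
  unfolding spread_def L2_set_def by (simp add: sum.cartesian_product case_prod_beta)

lemma spread_cong: "(\<And>i. i < N \<Longrightarrow> u i = w i) \<Longrightarrow> spread N u = spread N w"
  unfolding spread_def by (intro arg_cong[where f = sqrt] sum.cong) auto

lemma frob_Delta: "frob N (Delta y n) = spread N (y n)"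
  unfolding frob_def spread_def Delta_def ..

lemma frob_Delta_diff:
  "frob N (\<lambda>i j. Delta y n i j - Delta z n i j) = spread N (\<lambda>i. y n i - z n i)"
  unfolding frob_def spread_def Delta_def by (simp add: algebra_simps)

lemma spread_add_le: "spread N (\<lambda>i. u i + w i) \<le> spread N u + spread N w"
proof -
  have "spread N (\<lambda>i. u i + w i)
      \<le> L2_set (\<lambda>(i, j). norm (u i - u j) + norm (w i - w j)) ({..<N} \<times> {..<N})"
    unfolding spread_L2_set
    by (rule L2_set_mono) (auto simp: add_diff_add intro: norm_triangle_ineq)
  also have "\<dots> \<le> spread N u + spread N w"
    unfolding spread_L2_set case_prod_beta by (rule L2_set_triangle_ineq)
  finally show ?thesis .
qed

lemma spread_scaleR: "spread N (\<lambda>i. c *\<^sub>R u i) = \<bar>c\<bar> * spread N u"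
  unfolding spread_L2_set case_prod_beta
  by (simp add: L2_set_right_distrib flip: scaleR_diff_right)

lemma spread_add_const: "spread N (\<lambda>i. u i + c) = spread N u"
  unfolding spread_def by simp

lemma frob_real_diff_le: "frob_real N (\<lambda>i j. p i j - q i j) \<le> frob_real N p + frob_real N q"
proof -
  have L2: "frob_real N r = L2_set (\<lambda>x. r (fst x) (snd x)) ({..<N} \<times> {..<N})" for r
    unfolding frob_real_def L2_set_def by (simp add: sum.cartesian_product case_prod_beta)
  have "frob_real N (\<lambda>i j. p i j + - q i j) \<le> frob_real N p + frob_real N (\<lambda>i j. - q i j)"
    unfolding L2 by (rule L2_set_triangle_ineq)
  then show ?thesis by (simp add: frob_real_def)
qed

lemma norm_sum_scaleR_squared_le:
  "(norm (\<Sum>k\<in>K. c k *\<^sub>R y k))\<^sup>2 \<le> (\<Sum>k\<in>K. (c k)\<^sup>2) * (\<Sum>k\<in>K. (norm (y k))\<^sup>2)"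
proof -
  have "norm (\<Sum>k\<in>K. c k *\<^sub>R y k) \<le> (\<Sum>k\<in>K. \<bar>c k\<bar> * norm (y k))"
    by (rule order_trans[OF norm_sum]) simp
  then have "(norm (\<Sum>k\<in>K. c k *\<^sub>R y k))\<^sup>2 \<le> (\<Sum>k\<in>K. \<bar>c k\<bar> * norm (y k))\<^sup>2"
    by (intro power_mono) auto
  also have "\<dots> \<le> (\<Sum>k\<in>K. \<bar>c k\<bar>\<^sup>2) * (\<Sum>k\<in>K. (norm (y k))\<^sup>2)"
    by (rule Cauchy_Schwarz_ineq_sum)
  finally show ?thesis by simp
qed

lemma spread_squared_le: "(spread N g)\<^sup>2 \<le> 4 * real N * (\<Sum>i<N. (norm (g i))\<^sup>2)"
proof -
  have "(norm (g i - g j))\<^sup>2 \<le> 2 * (norm (g i))\<^sup>2 + 2 * (norm (g j))\<^sup>2" for i j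
  proof -
    have "(norm (g i - g j))\<^sup>2 \<le> (norm (g i) + norm (g j))\<^sup>2"
      by (intro power_mono norm_triangle_ineq4) simp
    also have "\<dots> \<le> 2 * (norm (g i))\<^sup>2 + 2 * (norm (g j))\<^sup>2"
      using sum_squares_bound[of "norm (g i)" "norm (g j)"] by (simp add: power2_sum)
    finally show ?thesis .
  qed
  then have "(spread N g)\<^sup>2 \<le> (\<Sum>i<N. \<Sum>j<N. 2 * (norm (g i))\<^sup>2 + 2 * (norm (g j))\<^sup>2)"
    unfolding spread_squared by (intro sum_mono)
  also have "\<dots> = 4 * real N * (\<Sum>i<N. (norm (g i))\<^sup>2)"
    by (simp add: sum.distrib algebra_simps flip: sum_distrib_left)
  finally show ?thesis .
qed

text \<open>A combination with zero total weight only sees the differences \<open>u k - u l\<close>;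
  averaging the Cauchy--Schwarz bound over the base point \<open>l\<close> brings in the spread.\<close>

lemma zero_sum_combination_norm_squared_le:
  assumes "(\<Sum>k<N. d k) = 0"
  shows "real N * (norm (\<Sum>k<N. d k *\<^sub>R u k))\<^sup>2 \<le> (\<Sum>k<N. (d k)\<^sup>2) * (spread N u)\<^sup>2"
proof -
  have "(norm (\<Sum>k<N. d k *\<^sub>R u k))\<^sup>2 \<le> (\<Sum>k<N. (d k)\<^sup>2) * (\<Sum>k<N. (norm (u l - u k))\<^sup>2)" for l
  proof -
    have "(\<Sum>k<N. d k *\<^sub>R u k) = (\<Sum>k<N. d k *\<^sub>R (u k - u l))"
      using assms by (simp add: scaleR_diff_right sum_subtractf flip: scaleR_sum_left)
    then show ?thesis
      using norm_sum_scaleR_squared_le[of d "\<lambda>k. u k - u l" "{..<N}"]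
      by (simp add: norm_minus_commute)
  qed
  then have "(\<Sum>l<N. (norm (\<Sum>k<N. d k *\<^sub>R u k))\<^sup>2)
      \<le> (\<Sum>l<N. (\<Sum>k<N. (d k)\<^sup>2) * (\<Sum>k<N. (norm (u l - u k))\<^sup>2))"
    by (intro sum_mono)
  then show ?thesis by (simp add: spread_squared sum_distrib_left)
qed

lemma spread_zero_row_sums_le:
  assumes "\<And>i. i < N \<Longrightarrow> (\<Sum>k<N. d i k) = 0"
  shows "spread N (\<lambda>i. \<Sum>k<N. d i k *\<^sub>R u k) \<le> 2 * frob_real N d * spread N u"
proof -
  define e where "e i = (\<Sum>k<N. d i k *\<^sub>R u k)" for i
  have "real N * (\<Sum>i<N. (norm (e i))\<^sup>2) \<le> (\<Sum>i<N. (\<Sum>k<N. (d i k)\<^sup>2) * (spread N u)\<^sup>2)"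
    unfolding sum_distrib_left e_def
    by (intro sum_mono zero_sum_combination_norm_squared_le assms) simp
  then have "(spread N e)\<^sup>2 \<le> (2 * frob_real N d * spread N u)\<^sup>2"
    using spread_squared_le[of N e]
    by (simp add: frob_real_def power_mult_distrib sum_nonneg flip: sum_distrib_right)
  then show ?thesis
    unfolding e_def by (rule power2_le_imp_le) (simp add: frob_real_def spread_nonneg sum_nonneg)
qed

definition consensus_step ::
    "nat \<Rightarrow> real \<Rightarrow> (nat \<Rightarrow> nat \<Rightarrow> real) \<Rightarrow> (nat \<Rightarrow> 'v::real_vector) \<Rightarrow> nat \<Rightarrow> 'v" where
  "consensus_step N t p u i = u i + t *\<^sub>R (\<Sum>k<N. p i k *\<^sub>R (u k - u i))"

text \<open>Splitting \<open>p\<close> into the uniform averaging matrix and \<open>d = p - 1/N\<close> writes a step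
  as the relaxation \<open>(1 - t) u + t mean\<close> towards the mean, perturbed by the
  zero-row-sum combination \<open>t d u\<close>.\<close>

lemma spread_consensus_step_le:
  assumes rows: "\<And>i. i < N \<Longrightarrow> (\<Sum>k<N. p i k) = 1" and t: "0 \<le> t" "t \<le> 1"
  shows "spread N (consensus_step N t p u)
    \<le> (1 - t + 2 * t * frob_real N (\<lambda>i k. p i k - 1 / real N)) * spread N u"
proof -
  define d where "d = (\<lambda>i k. p i k - 1 / real N)"
  define mean where "mean = (1 / real N) *\<^sub>R (\<Sum>k<N. u k)"
  have step: "consensus_step N t p u i = ((1 - t) *\<^sub>R u i + t *\<^sub>R (\<Sum>k<N. d i k *\<^sub>R u k)) + t *\<^sub>R mean"
    if "i < N" for i
  proof -
    have "(\<Sum>k<N. p i k *\<^sub>R (u k - u i)) = (\<Sum>k<N. p i k *\<^sub>R u k) - u i"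
      using rows[OF that] by (simp add: scaleR_diff_right sum_subtractf flip: scaleR_sum_left)
    also have "(\<Sum>k<N. p i k *\<^sub>R u k) = (\<Sum>k<N. d i k *\<^sub>R u k) + mean"
      by (simp add: d_def mean_def scaleR_diff_left sum_subtractf scaleR_sum_right)
    finally have eq: "(\<Sum>k<N. p i k *\<^sub>R (u k - u i)) = (\<Sum>k<N. d i k *\<^sub>R u k) + mean - u i" .
    show ?thesis
      unfolding consensus_step_def eq by (simp add: algebra_simps)
  qed
  have zero: "(\<Sum>k<N. d i k) = 0" if "i < N" for i
    using rows[OF that] that by (simp add: d_def sum_subtractf)
  have "spread N (consensus_step N t p u)
      = spread N (\<lambda>i. (1 - t) *\<^sub>R u i + t *\<^sub>R (\<Sum>k<N. d i k *\<^sub>R u k))"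
    using step by (subst spread_cong[where w = "\<lambda>i. _ i + t *\<^sub>R mean"]) (simp_all add: spread_add_const)
  also have "\<dots> \<le> (1 - t) * spread N u + t * spread N (\<lambda>i. \<Sum>k<N. d i k *\<^sub>R u k)"
    using spread_add_le[of N "\<lambda>i. (1 - t) *\<^sub>R u i" "\<lambda>i. t *\<^sub>R (\<Sum>k<N. d i k *\<^sub>R u k)"] t
    by (simp add: spread_scaleR)
  also have "\<dots> \<le> (1 - t) * spread N u + t * (2 * frob_real N d * spread N u)"
    using t by (intro add_left_mono mult_left_mono spread_zero_row_sums_le zero)
  finally show ?thesis by (simp add: d_def algebra_simps)
qed

lemma consensus_step_diff:
  assumes "(\<Sum>k<N. p i k) = 1" "(\<Sum>k<N. q i k) = 1"
  shows "consensus_step N t p v i - consensus_step N t q w i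
    = consensus_step N t q (\<lambda>i. v i - w i) i + t *\<^sub>R (\<Sum>k<N. (p i k - q i k) *\<^sub>R v k)"
proof -
  have "(\<Sum>k<N. p i k *\<^sub>R (v k - v i)) - (\<Sum>k<N. q i k *\<^sub>R (w k - w i))
      = (\<Sum>k<N. q i k *\<^sub>R ((v k - w k) - (v i - w i))) + (\<Sum>k<N. (p i k - q i k) *\<^sub>R (v k - v i))"
    by (simp add: algebra_simps sum.distrib sum_subtractf)
  also have "(\<Sum>k<N. (p i k - q i k) *\<^sub>R (v k - v i)) = (\<Sum>k<N. (p i k - q i k) *\<^sub>R v k)"
    using assms by (simp add: scaleR_diff_right sum_subtractf flip: scaleR_sum_left)
  finally have eq: "(\<Sum>k<N. p i k *\<^sub>R (v k - v i)) - (\<Sum>k<N. q i k *\<^sub>R (w k - w i))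
      = (\<Sum>k<N. q i k *\<^sub>R ((v k - w k) - (v i - w i))) + (\<Sum>k<N. (p i k - q i k) *\<^sub>R v k)" .
  have "consensus_step N t p v i - consensus_step N t q w i
      = (v i - w i) + t *\<^sub>R ((\<Sum>k<N. p i k *\<^sub>R (v k - v i)) - (\<Sum>k<N. q i k *\<^sub>R (w k - w i)))"
    unfolding consensus_step_def by (simp add: algebra_simps)
  then show ?thesis
    unfolding eq consensus_step_def by (simp add: scaleR_add_right add.assoc)
qed

lemma spread_consensus_step_diff_le:
  assumes rows_p: "\<And>i. i < N \<Longrightarrow> (\<Sum>k<N. p i k) = 1"
    and rows_q: "\<And>i. i < N \<Longrightarrow> (\<Sum>k<N. q i k) = 1"
    and t: "0 \<le> t" "t \<le> 1"
  shows "spread N (\<lambda>i. consensus_step N t p v i - consensus_step N t q w i)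
    \<le> (1 - t + 2 * t * frob_real N (\<lambda>i k. q i k - 1 / real N)) * spread N (\<lambda>i. v i - w i)
      + 2 * t * (frob_real N (\<lambda>i k. p i k - 1 / real N) + frob_real N (\<lambda>i k. q i k - 1 / real N))
        * spread N v"
proof -
  define d where "d = (\<lambda>i k. p i k - q i k)"
  have zero: "(\<Sum>k<N. d i k) = 0" if "i < N" for i
    using rows_p[OF that] rows_q[OF that] by (simp add: d_def sum_subtractf)
  have "frob_real N d = frob_real N (\<lambda>i k. (p i k - 1 / real N) - (q i k - 1 / real N))"
    by (simp add: d_def)
  also have "\<dots> \<le> frob_real N (\<lambda>i k. p i k - 1 / real N) + frob_real N (\<lambda>i k. q i k - 1 / real N)"
    by (rule frob_real_diff_le)
  finally have d_le: "frob_real N d \<le> \<dots>" .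
  have "spread N (\<lambda>i. consensus_step N t p v i - consensus_step N t q w i)
      = spread N (\<lambda>i. consensus_step N t q (\<lambda>i. v i - w i) i + t *\<^sub>R (\<Sum>k<N. d i k *\<^sub>R v k))"
    unfolding d_def using consensus_step_diff rows_p rows_q by (intro spread_cong) blast
  also have "\<dots> \<le> spread N (consensus_step N t q (\<lambda>i. v i - w i))
      + t * spread N (\<lambda>i. \<Sum>k<N. d i k *\<^sub>R v k)"
    using spread_add_le[of N "consensus_step N t q (\<lambda>i. v i - w i)"
        "\<lambda>i. t *\<^sub>R (\<Sum>k<N. d i k *\<^sub>R v k)"] t
    by (simp add: spread_scaleR)
  also have "\<dots> \<le> (1 - t + 2 * t * frob_real N (\<lambda>i k. q i k - 1 / real N)) * spread N (\<lambda>i. v i - w i)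
      + t * (2 * frob_real N d * spread N v)"
    using t by (intro add_mono mult_left_mono spread_consensus_step_le spread_zero_row_sums_le
        rows_q zero) auto
  also have "t * (2 * frob_real N d * spread N v)
      \<le> 2 * t * (frob_real N (\<lambda>i k. p i k - 1 / real N) + frob_real N (\<lambda>i k. q i k - 1 / real N))
        * spread N v"
    using mult_left_mono[OF mult_right_mono[OF d_le spread_nonneg[of N v]], of "2 * t"] t
    by (simp add: ac_simps)
  finally show ?thesis by simp
qed

section \<open>An elementary quadratic estimate\<close>

text \<open>Here \<open>s\<close> stands for \<open>t / N \<le> t / 2\<close>; as a function of \<open>s\<close> the difference of the two
  sides is convex and decreasing on \<open>[0, t/2]\<close>, where it ends at \<open>t (16 - 11 t) / 64\<close>.\<close>

lemma contraction_rate_squared_le: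
  fixes s t :: real
  assumes "0 < t" "t < 1" "0 \<le> s" "2 * s \<le> t"
  shows "(1 - t + s / 4)\<^sup>2 + t\<^sup>2 / 32 \<le> (1 - 2 * s)\<^sup>2 + t * s / 4 + t * (1 - 2 * s) / 2"
proof -
  have "(1 - 2 * s)\<^sup>2 + t * s / 4 + t * (1 - 2 * s) / 2 - ((1 - t + s / 4)\<^sup>2 + t\<^sup>2 / 32)
      = t * (16 - 11 * t) / 64 + (t / 2 - s) * (9 / 2 + t / 4 - 63 * (s + t / 2) / 16)"
    by (simp add: power2_eq_square field_simps)
  moreover have "0 \<le> (t / 2 - s) * (9 / 2 + t / 4 - 63 * (s + t / 2) / 16)"
    using assms by (intro mult_nonneg_nonneg) auto
  moreover have "0 \<le> t * (16 - 11 * t)"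
    using assms by simp
  ultimately show ?thesis by linarith
qed

lemma power2_le_quadratic_form:
  fixes R X V a b B c :: real
  assumes XV: "0 \<le> X" "0 \<le> V" and R: "0 \<le> R" "R \<le> a * X + b * V"
    and ab: "a * b \<le> B + c" and c: "0 \<le> c"
  shows "R\<^sup>2 \<le> (a\<^sup>2 + c) * X\<^sup>2 + 2 * B * X * V + (b\<^sup>2 + c) * V\<^sup>2"
proof -
  have "R\<^sup>2 \<le> (a * X + b * V)\<^sup>2"
    using R by (intro power_mono) auto
  also have "\<dots> = a\<^sup>2 * X\<^sup>2 + 2 * (a * b) * (X * V) + b\<^sup>2 * V\<^sup>2"
    by (simp add: power2_eq_square algebra_simps)
  also have "\<dots> \<le> a\<^sup>2 * X\<^sup>2 + 2 * (B + c) * (X * V) + b\<^sup>2 * V\<^sup>2"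
    using ab XV by (intro add_mono mult_right_mono mult_left_mono) auto
  also have "\<dots> \<le> (a\<^sup>2 + c) * X\<^sup>2 + 2 * B * X * V + (b\<^sup>2 + c) * V\<^sup>2"
    using mult_left_mono[OF sum_squares_bound[of X V] c]
    by (simp add: power2_eq_square algebra_simps)
  finally show ?thesis .
qed

lemma contraction_square_le:
  fixes N t X V R rho eps :: real
  assumes N: "2 \<le> N" and t: "0 < t" "t < 1" and XV: "0 \<le> X" "0 \<le> V"
    and R: "0 \<le> R" "R \<le> rho * X + eps * V"
    and rho: "0 \<le> rho" "rho \<le> 1 - t + t / (4 * N)"
    and eps: "0 \<le> eps" "eps \<le> t / (2 * N)"
  shows "R\<^sup>2 \<le> ((1 - 2 * t / N)\<^sup>2 + t\<^sup>2 / (4 * N) + t * (1 - 2 * t / N) / 2) * X\<^sup>2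
    + 2 * t * (1 - 2 * t / N) * X * V + 2 * t\<^sup>2 * V\<^sup>2"
proof -
  define s where "s = t / N"
  define m where "m = 1 - 2 * t / N"
  have s: "0 \<le> s" "2 * s \<le> t" "m = 1 - 2 * s" "t * s / 4 = t\<^sup>2 / (4 * N)"
    "t / (4 * N) = s / 4" "t / (2 * N) = s / 2"
    using N t by (auto simp: s_def m_def field_simps power2_eq_square)
  have eps_t: "eps \<le> t / 4"
    using eps(2) s by linarith
  have "rho\<^sup>2 \<le> (1 - t + s / 4)\<^sup>2"
    using rho s by (intro power_mono) auto
  then have rho_sq: "rho\<^sup>2 + t\<^sup>2 / 32 \<le> m\<^sup>2 + t\<^sup>2 / (4 * N) + t * m / 2"
    using contraction_rate_squared_le[OF t s(1,2)] s(4) unfolding s(3) by linarith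
  have "eps\<^sup>2 \<le> (t / 4)\<^sup>2"
    using eps eps_t by (intro power_mono) auto
  moreover have "(t / 4)\<^sup>2 = t\<^sup>2 / 16"
    by (simp add: power_divide)
  ultimately have eps_sq: "eps\<^sup>2 + t\<^sup>2 / 32 \<le> 2 * t\<^sup>2"
    using zero_le_power2[of t] by linarith
  have "m * eps \<le> m * t"
    using s t eps_t by (intro mult_left_mono) auto
  moreover have "(rho - m) * eps \<le> t / 8 * eps"
    using rho(2) s eps(1) by (intro mult_right_mono) auto
  moreover have "t / 8 * eps \<le> t / 8 * (t / 4)"
    using eps_t t by (intro mult_left_mono) auto
  ultimately have "rho * eps \<le> t * m + t\<^sup>2 / 32"
    by (simp add: power2_eq_square algebra_simps)
  then have "R\<^sup>2 \<le> (rho\<^sup>2 + t\<^sup>2 / 32) * X\<^sup>2 + 2 * (t * m) * X * V + (eps\<^sup>2 + t\<^sup>2 / 32) * V\<^sup>2"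
    by (intro power2_le_quadratic_form[OF XV R]) auto
  also have "\<dots> \<le> (m\<^sup>2 + t\<^sup>2 / (4 * N) + t * m / 2) * X\<^sup>2 + 2 * t * m * X * V + 2 * t\<^sup>2 * V\<^sup>2"
    using mult_right_mono[OF rho_sq zero_le_power2[of X]] mult_right_mono[OF eps_sq zero_le_power2[of V]]
    by linarith
  finally show ?thesis
    by (simp only: m_def)
qed

lemma contraction_coefficient_le:
  fixes N t m mu al :: real
  assumes "0 < N" "0 \<le> t" "0 \<le> m" "m \<le> mu" "0 \<le> al"
  shows "m\<^sup>2 + t\<^sup>2 / (4 * N) + t * m / 2
    \<le> mu\<^sup>2 + 4 * t\<^sup>2 * (al + 1 / (16 * N)) + 2 * sqrt 2 * t * mu * sqrt (al + 1 / 16)"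
proof -
  have "1 / 4 \<le> sqrt (al + 1 / 16)"
    using real_sqrt_le_mono[of "1 / 16" "al + 1 / 16"] assms(5) by (simp add: real_sqrt_divide)
  then have "1 * (1 / 4) \<le> sqrt 2 * sqrt (al + 1 / 16)"
    by (intro mult_mono) auto
  then have "t * m * (1 / 2) \<le> t * mu * (2 * (sqrt 2 * sqrt (al + 1 / 16)))"
    using assms by (intro mult_mono) auto
  moreover have "m\<^sup>2 \<le> mu\<^sup>2"
    using assms by (intro power_mono) auto
  moreover have "t\<^sup>2 / (4 * N) \<le> 4 * t\<^sup>2 * (al + 1 / (16 * N))"
    using assms by (simp add: field_simps)
  ultimately show ?thesis by (simp add: ac_simps)
qed

section \<open>A discrete flocking estimate\<close>

lemma integral_one_minus_linear:
  fixes P b c :: real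
  assumes "b \<le> c"
  shows "integral {b..c} (\<lambda>s. 1 - P * s) = (c - P * c\<^sup>2 / 2) - (b - P * b\<^sup>2 / 2)"
proof -
  have "((\<lambda>s. 1 - P * s) has_integral (c - P * c\<^sup>2 / 2) - (b - P * b\<^sup>2 / 2)) {b..c}"
  proof (rule fundamental_theorem_of_calculus[OF assms])
    fix s :: real
    have "((\<lambda>s. s - P * s\<^sup>2 / 2) has_real_derivative 1 - P * s) (at s within {b..c})"
      by (auto intro!: derivative_eq_intros)
    then show "((\<lambda>s. s - P * s\<^sup>2 / 2) has_vector_derivative 1 - P * s) (at s within {b..c})"
      by (simp add: has_real_derivative_iff_has_vector_derivative)
  qed
  then show ?thesis by (rule integral_unique)
qed

definition psi_primitive :: "real \<Rightarrow> real \<Rightarrow> real" where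
  "psi_primitive M s = s - s\<^sup>2 / (8 * M)"

lemma integral_psi_primitive:
  assumes "0 < M" "b \<le> M"
  shows "integral {b..M} (\<lambda>s. 1 - s / (4 * M)) = psi_primitive M M - psi_primitive M b"
  using integral_one_minus_linear[of b M "1 / (4 * M)"] assms
  by (simp add: psi_primitive_def power2_eq_square)

lemma psi_primitive_nonneg: "0 < M \<Longrightarrow> 0 \<le> s \<Longrightarrow> s \<le> M \<Longrightarrow> 0 \<le> psi_primitive M s"
  using mult_right_mono[of s "8 * M" s]
  by (simp add: psi_primitive_def power2_eq_square field_simps)

lemma psi_primitive_le: "0 < M \<Longrightarrow> psi_primitive M M \<le> M"
  by (simp add: psi_primitive_def)

text \<open>\<open>psi_primitive M\<close> increases up to \<open>4 M\<close> and is symmetric about it, so below \<open>7 M\<close>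
  it stays under its value at \<open>M\<close> only to the left of \<open>M\<close>.\<close>

lemma psi_primitive_less_imp_less:
  assumes "0 < M" "y < 7 * M" "psi_primitive M y < psi_primitive M M"
  shows "y < M"
proof -
  have "psi_primitive M M - psi_primitive M y = (M - y) * (7 * M - y) / (8 * M)"
    using assms(1) by (simp add: psi_primitive_def field_simps power2_eq_square)
  then have "0 < (M - y) * (7 * M - y) / (8 * M)"
    using assms(3) by simp
  then have "0 < (M - y) * (7 * M - y)"
    using assms(1) by (simp add: zero_less_divide_iff)
  then show ?thesis
    using assms by (simp add: zero_less_mult_iff)
qed

text \<open>The discrete analogue of the Ha--Liu Lyapunov functional \<open>V + \<kappa> \<integral>\<^sub>0\<^sup>X \<psi>\<close>:
  it does not increase while \<open>X < M\<close>, by concavity of the primitive.\<close>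

lemma lyapunov_step_le:
  assumes M: "0 < M" and \<kappa>: "0 < \<kappa>" and X: "X < M"
    and X_step: "X' \<le> X + h * V"
    and V_step: "V' \<le> (1 - h * \<kappa> + h * \<kappa> * X / (4 * M)) * V"
  shows "V' + \<kappa> * psi_primitive M X' \<le> V + \<kappa> * psi_primitive M X"
proof -
  define p where "p = 1 - X / (4 * M)"
  have p: "0 \<le> p"
    using X M by (simp add: p_def field_simps)
  have "psi_primitive M X' - psi_primitive M X = p * (X' - X) - (X' - X)\<^sup>2 / (8 * M)"
    unfolding psi_primitive_def p_def using M by (simp add: field_simps power2_eq_square)
  also have "\<dots> \<le> p * (X' - X)"
    using M by simp
  also have "\<dots> \<le> p * (h * V)"
    using X_step p by (intro mult_left_mono) auto
  finally have "\<kappa> * psi_primitive M X' \<le> \<kappa> * psi_primitive M X + h * \<kappa> * p * V"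
    using \<kappa> mult_left_mono[of _ _ \<kappa>] by (fastforce simp: algebra_simps)
  moreover have "V' \<le> V - h * \<kappa> * p * V"
    using V_step M by (simp add: p_def algebra_simps)
  ultimately show ?thesis by linarith
qed

lemma discrete_flocking_bound:
  fixes X V :: "nat \<Rightarrow> real"
  assumes M: "0 < M" and \<kappa>: "0 < \<kappa>" and h: "0 < h" "h * \<kappa> < 1"
    and X0: "\<And>n. 0 \<le> X n" and V0: "\<And>n. 0 \<le> V n"
    and X_step: "\<And>n. X (Suc n) \<le> X n + h * V n"
    and V_step: "\<And>n. X n < M \<Longrightarrow> V (Suc n) \<le> (1 - h * \<kappa> + h * \<kappa> * X n / (4 * M)) * V n"
    and init: "X 0 < M" "V 0 < \<kappa> * integral {X 0..M} (\<lambda>s. 1 - s / (4 * M))"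
  shows "X n < M"
proof -
  let ?G = "psi_primitive M"
  define L0 where "L0 = V 0 + \<kappa> * ?G (X 0)"
  have "V 0 < \<kappa> * (?G M - ?G (X 0))"
    using init integral_psi_primitive[OF M] by simp
  then have L0_lt: "L0 < \<kappa> * ?G M"
    by (simp add: L0_def right_diff_distrib)
  have "X n < M \<and> V n + \<kappa> * ?G (X n) \<le> L0" for n
  proof (induction n)
    case 0
    then show ?case using init(1) by (simp add: L0_def)
  next
    case (Suc n)
    then have Xn: "X n < M" and Ln: "V n + \<kappa> * ?G (X n) \<le> L0" by auto
    have L_next: "V (Suc n) + \<kappa> * ?G (X (Suc n)) \<le> L0"
      using lyapunov_step_le[OF M \<kappa> Xn X_step V_step[OF Xn]] Ln by linarith
    have "0 \<le> \<kappa> * ?G (X n)"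
      using psi_primitive_nonneg[OF M X0] Xn \<kappa> by simp
    then have "V n < \<kappa> * M"
      using Ln L0_lt psi_primitive_le[OF M] \<kappa> mult_left_mono[of "?G M" M \<kappa>] by linarith
    then have "h * V n < h * \<kappa> * M"
      using h by simp
    also have "\<dots> < M"
      using h M by simp
    finally have "X (Suc n) < 7 * M"
      using X_step[of n] Xn M by simp
    moreover have "\<kappa> * ?G (X (Suc n)) < \<kappa> * ?G M"
      using L_next L0_lt V0[of "Suc n"] by linarith
    then have "?G (X (Suc n)) < ?G M"
      using \<kappa> by simp
    ultimately show ?case
      using L_next psi_primitive_less_imp_less[OF M] by blast
  qed
  then show ?thesis by simp
qed

section \<open>The discrete Motsch--Tadmor model\<close>

lemma mt_phi_row_sum:
  assumes "\<And>r. 0 \<le> r \<Longrightarrow> 0 < a r" and "i < N"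
  shows "(\<Sum>j<N. mt_phi N a x n i j) = 1"
proof -
  have "0 < (\<Sum>k<N. a (norm (x n i - x n k)))"
    using assms by (intro sum_pos) auto
  then show ?thesis
    unfolding mt_phi_def by (simp flip: sum_divide_distrib)
qed

lemma mt_phi_deviation_abs_le:
  assumes c1: "0 < c1" and a_lower: "\<And>r. 0 \<le> r \<Longrightarrow> c1 \<le> a r"
    and Lip: "\<And>r1 r2. 0 \<le> r1 \<Longrightarrow> 0 \<le> r2 \<Longrightarrow> \<bar>a r1 - a r2\<bar> \<le> La * \<bar>r1 - r2\<bar>"
    and i: "i < N"
  shows "\<bar>mt_phi N a x n i j - 1 / real N\<bar>
    \<le> La / ((real N)\<^sup>2 * c1) * (\<Sum>k<N. norm (x n j - x n k))"
proof -
  define y where "y = x n"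
  define S where "S = (\<Sum>k<N. a (norm (y i - y k)))"
  have N: "0 < real N" using i by simp
  have La: "0 \<le> La" using Lip[of 1 0] by simp
  have S: "real N * c1 \<le> S"
    unfolding S_def using sum_mono[of "{..<N}" "\<lambda>_. c1"] a_lower by simp
  have S_pos: "0 < S" using S mult_pos_pos[OF N c1] by linarith
  have "mt_phi N a x n i j - 1 / real N = (real N * a (norm (y i - y j)) - S) / (real N * S)"
    unfolding mt_phi_def y_def[symmetric] S_def[symmetric] using S_pos N by (simp add: field_simps)
  also have "real N * a (norm (y i - y j)) - S = (\<Sum>k<N. a (norm (y i - y j)) - a (norm (y i - y k)))"
    unfolding S_def by (simp add: sum_subtractf)
  finally have eq: "mt_phi N a x n i j - 1 / real N
      = (\<Sum>k<N. a (norm (y i - y j)) - a (norm (y i - y k))) / (real N * S)" .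
  have "\<bar>a (norm (y i - y j)) - a (norm (y i - y k))\<bar> \<le> La * norm (y j - y k)" for k
  proof -
    have "\<bar>a (norm (y i - y j)) - a (norm (y i - y k))\<bar> \<le> La * \<bar>norm (y i - y j) - norm (y i - y k)\<bar>"
      by (rule Lip) auto
    also have "\<dots> \<le> La * norm (y j - y k)"
      using norm_triangle_ineq3[of "y i - y j" "y i - y k"] La
      by (intro mult_left_mono) (auto simp: norm_minus_commute)
    finally show ?thesis .
  qed
  then have "\<bar>\<Sum>k<N. a (norm (y i - y j)) - a (norm (y i - y k))\<bar> \<le> La * (\<Sum>k<N. norm (y j - y k))"
    unfolding sum_distrib_left by (intro order_trans[OF sum_abs] sum_mono)
  then have "\<bar>mt_phi N a x n i j - 1 / real N\<bar> \<le> La * (\<Sum>k<N. norm (y j - y k)) / (real N * S)"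
    unfolding eq using S_pos N by (simp add: abs_divide divide_right_mono)
  also have "\<dots> \<le> La * (\<Sum>k<N. norm (y j - y k)) / (real N * (real N * c1))"
    using S S_pos N c1 La
    by (intro divide_left_mono mult_left_mono mult_nonneg_nonneg sum_nonneg mult_pos_pos) auto
  finally show ?thesis
    by (simp add: y_def power2_eq_square mult.assoc)
qed

lemma mt_phi_deviation_le:
  assumes c1: "0 < c1" and a_lower: "\<And>r. 0 \<le> r \<Longrightarrow> c1 \<le> a r"
    and Lip: "\<And>r1 r2. 0 \<le> r1 \<Longrightarrow> 0 \<le> r2 \<Longrightarrow> \<bar>a r1 - a r2\<bar> \<le> La * \<bar>r1 - r2\<bar>"
  shows "frob_real N (\<lambda>i j. mt_phi N a x n i j - 1 / real N) \<le> La / (real N * c1) * spread N (x n)"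
proof -
  define B where "B = La / ((real N)\<^sup>2 * c1)"
  have La: "0 \<le> La" using Lip[of 1 0] by simp
  have entry: "(mt_phi N a x n i j - 1 / real N)\<^sup>2 \<le> B\<^sup>2 * (real N * (\<Sum>k<N. (norm (x n j - x n k))\<^sup>2))"
    if "i < N" for i j
  proof -
    have "(mt_phi N a x n i j - 1 / real N)\<^sup>2 \<le> (B * (\<Sum>k<N. 1 * norm (x n j - x n k)))\<^sup>2"
      using mt_phi_deviation_abs_le[OF c1 a_lower Lip that, of x n j]
      by (simp add: B_def power2_le_iff_abs_le)
    also have "\<dots> \<le> B\<^sup>2 * ((\<Sum>k<N. 1\<^sup>2) * (\<Sum>k<N. (norm (x n j - x n k))\<^sup>2))"
      unfolding power_mult_distrib by (intro mult_left_mono Cauchy_Schwarz_ineq_sum) auto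
    finally show ?thesis by simp
  qed
  have "(\<Sum>i<N. \<Sum>j<N. (mt_phi N a x n i j - 1 / real N)\<^sup>2)
      \<le> (\<Sum>i<N. \<Sum>j<N. B\<^sup>2 * (real N * (\<Sum>k<N. (norm (x n j - x n k))\<^sup>2)))"
    by (intro sum_mono entry) auto
  also have "\<dots> = real N * (B\<^sup>2 * (real N * (spread N (x n))\<^sup>2))"
    by (simp add: spread_squared sum_distrib_left)
  also have "\<dots> = (La / (real N * c1) * spread N (x n))\<^sup>2"
    by (cases "N = 0") (simp_all add: B_def power2_eq_square field_simps)
  finally show ?thesis
    unfolding frob_real_def using La c1
    by (intro real_le_lsqrt) (auto simp: sum_nonneg spread_nonneg)
qed

lemma mt_solution_velocity_step:
  assumes "mt_solution N \<kappa> h a x v" and "i < N"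
  shows "v (Suc n) i = consensus_step N (h * \<kappa>) (mt_phi N a x n) (v n) i"
  using assms unfolding mt_solution_def consensus_step_def by simp

lemma mt_spread_position_step:
  assumes "mt_solution N \<kappa> h a x v" and "0 \<le> h"
  shows "spread N (x (Suc n)) \<le> spread N (x n) + h * spread N (v n)"
proof -
  have "spread N (x (Suc n)) = spread N (\<lambda>i. x n i + h *\<^sub>R v n i)"
    using assms(1) unfolding mt_solution_def by (intro spread_cong) simp
  also have "\<dots> \<le> spread N (x n) + h * spread N (v n)"
    using spread_add_le[of N "x n" "\<lambda>i. h *\<^sub>R v n i"] assms(2) by (simp add: spread_scaleR)
  finally show ?thesis .
qed

lemma mt_spread_position_lt:
  assumes sol: "mt_solution N \<kappa> h a x v" and N: "1 \<le> N"
    and c1: "0 < c1" and a_lower: "\<And>r. 0 \<le> r \<Longrightarrow> c1 \<le> a r"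
    and Lip: "\<And>r1 r2. 0 \<le> r1 \<Longrightarrow> 0 \<le> r2 \<Longrightarrow> \<bar>a r1 - a r2\<bar> \<le> La * \<bar>r1 - r2\<bar>"
    and M: "0 < M" "La * M / c1 \<le> 1 / 8"
    and \<kappa>: "0 < \<kappa>" and h: "0 < h" "h * \<kappa> < 1"
    and init: "spread N (x 0) < M"
      "spread N (v 0) < \<kappa> * integral {spread N (x 0)..M} (\<lambda>s. 1 - s / (4 * M))"
  shows "spread N (x n) < M"
proof (rule discrete_flocking_bound[where X = "\<lambda>n. spread N (x n)" and V = "\<lambda>n. spread N (v n)"])
  show "spread N (x (Suc n)) \<le> spread N (x n) + h * spread N (v n)" for n
    using mt_spread_position_step[OF sol] h by simp
next
  fix n
  let ?f = "frob_real N (\<lambda>i j. mt_phi N a x n i j - 1 / real N)"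
  have a_pos: "0 < a r" if "0 \<le> r" for r
    using a_lower[OF that] c1 by simp
  have "La / (real N * c1) \<le> La / c1"
    using N c1 Lip[of 1 0] by (intro divide_left_mono) (auto simp: mult_le_cancel_right1)
  also have "\<dots> \<le> 1 / (8 * M)"
    using M c1 by (simp add: field_simps)
  finally have "La / (real N * c1) * spread N (x n) \<le> 1 / (8 * M) * spread N (x n)"
    by (rule mult_right_mono) (rule spread_nonneg)
  then have "2 * ?f \<le> spread N (x n) / (4 * M)"
    using mt_phi_deviation_le[OF c1 a_lower Lip, of N x n] by simp
  then have "h * \<kappa> * (2 * ?f) \<le> h * \<kappa> * (spread N (x n) / (4 * M))"
    using h \<kappa> by (intro mult_left_mono) auto
  then have coeff: "1 - h * \<kappa> + 2 * (h * \<kappa>) * ?f \<le> 1 - h * \<kappa> + h * \<kappa> * spread N (x n) / (4 * M)"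
    by (simp add: ac_simps)
  have "spread N (v (Suc n)) = spread N (consensus_step N (h * \<kappa>) (mt_phi N a x n) (v n))"
    using mt_solution_velocity_step[OF sol] by (rule spread_cong)
  also have "\<dots> \<le> (1 - h * \<kappa> + 2 * (h * \<kappa>) * ?f) * spread N (v n)"
    using h \<kappa> by (intro spread_consensus_step_le mt_phi_row_sum a_pos) auto
  also have "\<dots> \<le> (1 - h * \<kappa> + h * \<kappa> * spread N (x n) / (4 * M)) * spread N (v n)"
    using coeff spread_nonneg by (rule mult_right_mono)
  finally show "spread N (v (Suc n)) \<le> (1 - h * \<kappa> + h * \<kappa> * spread N (x n) / (4 * M)) * spread N (v n)" .
qed (use M \<kappa> h init spread_nonneg in auto)

lemma mt_spread_velocity_diff_le:
  assumes sol: "mt_solution N \<kappa> h a x v" and sol': "mt_solution N \<kappa> h a x' v'"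
    and a_pos: "\<And>r. 0 \<le> r \<Longrightarrow> 0 < a r" and t: "0 \<le> h * \<kappa>" "h * \<kappa> \<le> 1"
    and dev: "frob_real N (\<lambda>i j. mt_phi N a x n i j - 1 / real N) \<le> \<delta>"
      "frob_real N (\<lambda>i j. mt_phi N a x' n i j - 1 / real N) \<le> \<delta>"
  shows "spread N (\<lambda>i. v (Suc n) i - v' (Suc n) i)
    \<le> (1 - h * \<kappa> + 2 * (h * \<kappa>) * \<delta>) * spread N (\<lambda>i. v n i - v' n i)
      + 4 * (h * \<kappa>) * \<delta> * spread N (v n)"
proof -
  have "spread N (\<lambda>i. v (Suc n) i - v' (Suc n) i)
      = spread N (\<lambda>i. consensus_step N (h * \<kappa>) (mt_phi N a x n) (v n) i
          - consensus_step N (h * \<kappa>) (mt_phi N a x' n) (v' n) i)"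
    using mt_solution_velocity_step[OF sol] mt_solution_velocity_step[OF sol'] by (intro spread_cong) simp
  also have "\<dots> \<le> (1 - h * \<kappa> + 2 * (h * \<kappa>) * frob_real N (\<lambda>i j. mt_phi N a x' n i j - 1 / real N))
        * spread N (\<lambda>i. v n i - v' n i)
      + 2 * (h * \<kappa>) * (frob_real N (\<lambda>i j. mt_phi N a x n i j - 1 / real N)
        + frob_real N (\<lambda>i j. mt_phi N a x' n i j - 1 / real N)) * spread N (v n)"
    using t by (intro spread_consensus_step_diff_le mt_phi_row_sum a_pos)
  also have "\<dots> \<le> (1 - h * \<kappa> + 2 * (h * \<kappa>) * \<delta>) * spread N (\<lambda>i. v n i - v' n i)
      + 4 * (h * \<kappa>) * \<delta> * spread N (v n)"
  proof -
    have "2 * (h * \<kappa>) * frob_real N (\<lambda>i j. mt_phi N a x' n i j - 1 / real N) \<le> 2 * (h * \<kappa>) * \<delta>"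
      using t dev by (intro mult_left_mono) auto
    moreover have "2 * (h * \<kappa>) * (frob_real N (\<lambda>i j. mt_phi N a x n i j - 1 / real N)
        + frob_real N (\<lambda>i j. mt_phi N a x' n i j - 1 / real N)) \<le> 2 * (h * \<kappa>) * (2 * \<delta>)"
      using t dev by (intro mult_left_mono) auto
    ultimately show ?thesis
      by (intro add_mono mult_right_mono spread_nonneg) auto
  qed
  finally show ?thesis .
qed

lemma Min_pair_sum_le:
  fixes p :: "nat \<Rightarrow> nat \<Rightarrow> real"
  assumes N: "1 \<le> N" and rows: "\<And>i. i < N \<Longrightarrow> (\<Sum>k<N. p i k) = 1"
  shows "Min ((\<lambda>(i, j). p i j + p j i) ` ({..<N} \<times> {..<N})) \<le> 2 / real N"
proof -
  let ?m = "Min ((\<lambda>(i, j). p i j + p j i) ` ({..<N} \<times> {..<N}))"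
  have "real (card ({..<N} \<times> {..<N})) * ?m \<le> (\<Sum>(i, j)\<in>{..<N} \<times> {..<N}. p i j + p j i)"
    by (intro sum_bounded_below) auto
  also have "\<dots> = (\<Sum>i<N. \<Sum>j<N. p i j) + (\<Sum>i<N. \<Sum>j<N. p j i)"
    by (simp add: sum.distrib flip: sum.cartesian_product)
  also have "(\<Sum>i<N. \<Sum>j<N. p j i) = (\<Sum>j<N. \<Sum>i<N. p j i)"
    by (rule sum.swap)
  also have "(\<Sum>i<N. \<Sum>j<N. p i j) + (\<Sum>j<N. \<Sum>i<N. p j i) = 2 * real N"
    using rows by simp
  finally show ?thesis
    using N by (simp add: field_simps)
qed

lemma Mconst_scaling:
  assumes "1 \<le> N" "0 < La" "0 < c1" "c1 \<le> c2"
  shows "0 < Mconst N La c1 c2"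
    and "La * Mconst N La c1 c2 / c1 * (1 + c2 / c1) = 1 / 4"
    and "La * Mconst N La c1 c2 / c1 \<le> 1 / 8"
    and "psi N La c1 c2 = (\<lambda>s. 1 - s / (4 * Mconst N La c1 c2))"
proof -
  define M where "M = Mconst N La c1 c2"
  define Q where "Q = La / c1 * (1 + c2 / c1)"
  have Q: "0 < Q" "4 * real N * phi_lip N La c1 c2 = 4 * Q"
    using assms by (simp_all add: Q_def phi_lip_def add_pos_nonneg)
  then have M_Q: "4 * M * Q = 1"
    by (simp add: M_def Mconst_def)
  then have "M = 1 / (4 * Q)"
    using Q(1) by (simp add: field_simps)
  then show M: "0 < Mconst N La c1 c2"
    using Q(1) by (simp add: M_def)
  have "La * M / c1 * (1 + c2 / c1) = M * Q"
    by (simp add: Q_def)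
  then have q: "La * M / c1 * (1 + c2 / c1) = 1 / 4"
    using M_Q by simp
  then show "La * Mconst N La c1 c2 / c1 * (1 + c2 / c1) = 1 / 4"
    by (simp only: M_def)
  have "La * M / c1 * 2 \<le> La * M / c1 * (1 + c2 / c1)"
    using assms M by (intro mult_left_mono) (auto simp: M_def)
  then have "La * M / c1 \<le> 1 / 8"
    using q by linarith
  then show "La * Mconst N La c1 c2 / c1 \<le> 1 / 8"
    by (simp only: M_def)
  have "phi_lip N La c1 c2 * real N = 1 / (4 * M)"
    using Q(2) M_Q M by (simp add: M_def field_simps)
  then show "psi N La c1 c2 = (\<lambda>s. 1 - s / (4 * Mconst N La c1 c2))"
    by (simp add: psi_def fun_eq_iff M_def)
qed

lemma mt_phi_deviation_le_of_spread_le: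
  assumes c1: "0 < c1" and a_lower: "\<And>r. 0 \<le> r \<Longrightarrow> c1 \<le> a r"
    and Lip: "\<And>r1 r2. 0 \<le> r1 \<Longrightarrow> 0 \<le> r2 \<Longrightarrow> \<bar>a r1 - a r2\<bar> \<le> La * \<bar>r1 - r2\<bar>"
    and M: "spread N (x n) \<le> M" "La * M / c1 \<le> 1 / 8"
  shows "frob_real N (\<lambda>i j. mt_phi N a x n i j - 1 / real N) \<le> 1 / (8 * real N)"
proof -
  have "frob_real N (\<lambda>i j. mt_phi N a x n i j - 1 / real N) \<le> La / (real N * c1) * spread N (x n)"
    by (rule mt_phi_deviation_le[OF c1 a_lower Lip])
  also have "\<dots> \<le> La / (real N * c1) * M"
    using M(1) Lip[of 1 0] c1 by (intro mult_left_mono) auto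
  also have "\<dots> = (La * M / c1) / real N"
    by simp
  also have "\<dots> \<le> (1 / 8) / real N"
    using M(2) by (intro divide_right_mono) auto
  finally show ?thesis by simp
qed

lemma scaled_coefficients:
  fixes N h \<kappa> La M c1 c2 y :: real
  assumes q: "La * M / c1 * (1 + c2 / c1) = 1 / 4"
  shows "La\<^sup>2 * M\<^sup>2 / c1\<^sup>2 * (1 + c2 / c1)\<^sup>2 = 1 / 16"
    and "La\<^sup>2 * M\<^sup>2 / (N * c1\<^sup>2) * (1 + c2 / c1)\<^sup>2 = 1 / (16 * N)"
    and "8 * h * \<kappa> * La * M / c1 * y * (1 + c2 / c1) = 2 * (h * \<kappa>) * y"
    and "32 * h\<^sup>2 * \<kappa>\<^sup>2 * La\<^sup>2 * M\<^sup>2 / c1\<^sup>2 * (1 + c2 / c1)\<^sup>2 = 2 * (h * \<kappa>)\<^sup>2"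
proof -
  have "La\<^sup>2 * M\<^sup>2 / c1\<^sup>2 * (1 + c2 / c1)\<^sup>2 = (La * M / c1 * (1 + c2 / c1))\<^sup>2"
    by (simp add: power_mult_distrib power_divide)
  also have "\<dots> = 1 / 16"
    unfolding q by (simp add: power_divide)
  finally show q2: "La\<^sup>2 * M\<^sup>2 / c1\<^sup>2 * (1 + c2 / c1)\<^sup>2 = 1 / 16" .
  have "La\<^sup>2 * M\<^sup>2 / (N * c1\<^sup>2) * (1 + c2 / c1)\<^sup>2 = La\<^sup>2 * M\<^sup>2 / c1\<^sup>2 * (1 + c2 / c1)\<^sup>2 / N"
    by simp
  then show "La\<^sup>2 * M\<^sup>2 / (N * c1\<^sup>2) * (1 + c2 / c1)\<^sup>2 = 1 / (16 * N)"
    by (simp only: q2)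
  have "8 * h * \<kappa> * La * M / c1 * y * (1 + c2 / c1) = 8 * (h * \<kappa>) * y * (La * M / c1 * (1 + c2 / c1))"
    by (simp add: ac_simps)
  then show "8 * h * \<kappa> * La * M / c1 * y * (1 + c2 / c1) = 2 * (h * \<kappa>) * y"
    by (simp only: q)
  have "32 * h\<^sup>2 * \<kappa>\<^sup>2 * La\<^sup>2 * M\<^sup>2 / c1\<^sup>2 * (1 + c2 / c1)\<^sup>2
      = 32 * (h * \<kappa>)\<^sup>2 * (La\<^sup>2 * M\<^sup>2 / c1\<^sup>2 * (1 + c2 / c1)\<^sup>2)"
    by (simp add: power_mult_distrib ac_simps)
  then show "32 * h\<^sup>2 * \<kappa>\<^sup>2 * La\<^sup>2 * M\<^sup>2 / c1\<^sup>2 * (1 + c2 / c1)\<^sup>2 = 2 * (h * \<kappa>)\<^sup>2"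
    by (simp only: q2)
qed

lemma scaled_contraction_square_le:
  fixes N h \<kappa> La M c1 c2 lam al R X V :: real
  assumes N: "2 \<le> N" and t: "0 < h * \<kappa>" "h * \<kappa> < 1"
    and q: "La * M / c1 * (1 + c2 / c1) = 1 / 4"
    and XV: "0 \<le> X" "0 \<le> V"
    and R: "0 \<le> R" "R \<le> (1 - h * \<kappa> + h * \<kappa> / (4 * N)) * X + h * \<kappa> / (2 * N) * V"
    and lam: "lam \<le> 2 / N" and al: "0 \<le> al"
  shows "R\<^sup>2
     \<le> ((1 - h * \<kappa> * lam)\<^sup>2
          + 4 * h\<^sup>2 * \<kappa>\<^sup>2 * (al + La\<^sup>2 * M\<^sup>2 / (N * c1\<^sup>2) * (1 + c2 / c1)\<^sup>2)
          + 2 * sqrt 2 * h * \<kappa> * (1 - h * \<kappa> * lam)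
              * sqrt (al + La\<^sup>2 * M\<^sup>2 / c1\<^sup>2 * (1 + c2 / c1)\<^sup>2))
         * X\<^sup>2
       + (8 * h * \<kappa> * La * M / c1 * (1 - h * \<kappa> * lam) * (1 + c2 / c1)) * X * V
       + (32 * h\<^sup>2 * \<kappa>\<^sup>2 * La\<^sup>2 * M\<^sup>2 / c1\<^sup>2 * (1 + c2 / c1)\<^sup>2) * V\<^sup>2"
proof -
  define t where "t = h * \<kappa>"
  define m where "m = 1 - 2 * t / N"
  define mu where "mu = 1 - t * lam"
  have t': "0 < t" "t < 1" and R': "R \<le> (1 - t + t / (4 * N)) * X + t / (2 * N) * V"
    using t R(2) by (simp_all only: t_def)
  have m: "0 \<le> m" "m \<le> mu"
    using N t' lam mult_left_mono[of lam "2 / N" t]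
    by (auto simp: m_def mu_def field_simps)
  have "R\<^sup>2 \<le> (m\<^sup>2 + t\<^sup>2 / (4 * N) + t * m / 2) * X\<^sup>2 + 2 * t * m * X * V + 2 * t\<^sup>2 * V\<^sup>2"
    unfolding m_def using t' N
    by (intro contraction_square_le[OF N t' XV R(1) R' _ order_refl _ order_refl]) auto
  also have "\<dots> \<le> (mu\<^sup>2 + 4 * t\<^sup>2 * (al + 1 / (16 * N)) + 2 * sqrt 2 * t * mu * sqrt (al + 1 / 16)) * X\<^sup>2
      + 2 * t * mu * X * V + 2 * t\<^sup>2 * V\<^sup>2"
    using N t' m al XV
    by (intro add_mono mult_right_mono mult_left_mono contraction_coefficient_le order_refl) auto
  finally show ?thesis
    unfolding scaled_coefficients[OF q] by (simp add: t_def mu_def power_mult_distrib ac_simps)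
qed

theorem proposition4p2:
  fixes N :: nat and \<kappa> h c1 c2 La :: real and a :: "real \<Rightarrow> real"
    and x v xb vb :: "nat \<Rightarrow> nat \<Rightarrow> real^'d"
  defines "M \<equiv> Mconst N La c1 c2"
  defines "lam \<equiv> (\<lambda>n. Min ((\<lambda>(i,j). mt_phi N a xb n i j + mt_phi N a xb n j i) ` ({..<N} \<times> {..<N})))"
  defines "alpha \<equiv> (\<lambda>n. Max ((\<lambda>(i,j). (1 - mt_phi N a xb n i j - mt_phi N a xb n i i)\<^sup>2) ` ({..<N} \<times> {..<N})))"
  assumes hN: "N \<ge> 1" and hk: "\<kappa> > 0" and hh: "h > 0" "h < 1" "h < 1 / \<kappa>"
    and hc: "0 < c1" "c1 \<le> c2"
    and ha: "\<And>r. r \<ge> 0 \<Longrightarrow> c1 \<le> a r \<and> a r \<le> c2"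
    and hL: "La > 0" "\<And>r1 r2. r1 \<ge> 0 \<Longrightarrow> r2 \<ge> 0 \<Longrightarrow> \<bar>a r1 - a r2\<bar> \<le> La * \<bar>r1 - r2\<bar>"
    and sol1: "mt_solution N \<kappa> h a x v"
    and sol2: "mt_solution N \<kappa> h a xb vb"
    and init_x: "max (frob N (Delta x 0)) (frob N (Delta xb 0)) < M"
    and init_v: "frob N (Delta v 0) < \<kappa> * integral {frob N (Delta x 0)..M} (psi N La c1 c2)"
    and init_vb: "frob N (Delta vb 0) < \<kappa> * integral {frob N (Delta xb 0)..M} (psi N La c1 c2)"
  shows "(frob N (\<lambda>i j. Delta v (Suc n) i j - Delta vb (Suc n) i j))\<^sup>2
     \<le> ((1 - h * \<kappa> * lam n)\<^sup>2
          + 4 * h\<^sup>2 * \<kappa>\<^sup>2 * (alpha n + La\<^sup>2 * M\<^sup>2 / (real N * c1\<^sup>2) * (1 + c2 / c1)\<^sup>2)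
          + 2 * sqrt 2 * h * \<kappa> * (1 - h * \<kappa> * lam n)
              * sqrt (alpha n + La\<^sup>2 * M\<^sup>2 / c1\<^sup>2 * (1 + c2 / c1)\<^sup>2))
         * (frob N (\<lambda>i j. Delta v n i j - Delta vb n i j))\<^sup>2
       + (8 * h * \<kappa> * La * M / c1 * (1 - h * \<kappa> * lam n) * (1 + c2 / c1))
         * frob N (\<lambda>i j. Delta v n i j - Delta vb n i j) * frob N (Delta v n)
       + (32 * h\<^sup>2 * \<kappa>\<^sup>2 * La\<^sup>2 * M\<^sup>2 / c1\<^sup>2 * (1 + c2 / c1)\<^sup>2)
         * (frob N (Delta v n))\<^sup>2"
proof (cases "N = 1")
  case True
  then show ?thesis by (simp add: frob_def Delta_def)
next
  case False
  with hN have N: "2 \<le> real N" by simp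
  have t: "0 < h * \<kappa>" "h * \<kappa> < 1"
    using hk hh by (auto simp: field_simps)
  have a_lower: "\<And>r. 0 \<le> r \<Longrightarrow> c1 \<le> a r" and a_pos: "\<And>r. 0 \<le> r \<Longrightarrow> 0 < a r"
    using ha hc(1) by (blast, fastforce)
  note M = Mconst_scaling[OF hN hL(1) hc, folded M_def]
  have "spread N (x n) < M" "spread N (xb n) < M"
    using init_x init_v init_vb t
    by (auto simp: frob_Delta M(4) intro!: mt_spread_position_lt[OF sol1 hN hc(1) a_lower hL(2) M(1,3) hk hh(1)]
        mt_spread_position_lt[OF sol2 hN hc(1) a_lower hL(2) M(1,3) hk hh(1)])
  then have dev: "frob_real N (\<lambda>i j. mt_phi N a x n i j - 1 / real N) \<le> 1 / (8 * real N)"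
      "frob_real N (\<lambda>i j. mt_phi N a xb n i j - 1 / real N) \<le> 1 / (8 * real N)"
    by (auto intro!: mt_phi_deviation_le_of_spread_le[OF hc(1) a_lower hL(2) _ M(3)])
  have R: "spread N (\<lambda>i. v (Suc n) i - vb (Suc n) i)
      \<le> (1 - h * \<kappa> + h * \<kappa> / (4 * real N)) * spread N (\<lambda>i. v n i - vb n i)
        + h * \<kappa> / (2 * real N) * spread N (v n)"
    using mt_spread_velocity_diff_le[OF sol1 sol2 a_pos _ _ dev] t by (simp add: ac_simps)
  have "lam n \<le> 2 / real N"
    unfolding lam_def by (rule Min_pair_sum_le[OF hN mt_phi_row_sum[OF a_pos]])
  moreover have "0 \<le> alpha n"
    unfolding alpha_def using hN
    by (intro order_trans[OF zero_le_power2 Max_ge]) (auto intro!: image_eqI[where x = "(0, 0)"])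
  ultimately show ?thesis
    unfolding frob_Delta frob_Delta_diff
    by (intro scaled_contraction_square_le[OF N t M(2) spread_nonneg spread_nonneg spread_nonneg R])
qed

end
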